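(* Let $-\beta\in(0,1)$, $c\in(0,1)$ and let $n\geq 2$ be an integer. Let $C_n=-\beta+\frac{(n+1)c}{1-c}$ and assume that $M_n(C_n;\beta,c)\neq 0$. Then the $n+1$ zeros of the polynomial $(x-C_n)M_n(x;\beta,c)$ interlace with the $n+1$ zeros of $M_{n+1}(x;\beta+1,c)$.
   Context: Monic Meixner polynomials are defined by $$M_n(x;\beta,c)=\left(\frac{c}{c-1}\right)^n(\beta)_n\sum_{k=0}^{n}\frac{(-n)_k(-x)_k(1-\frac1c)^k}{(\beta)_k\,k!},$$ for real $\beta,c$ with $c\neq 0$ and $\beta\notin\{-1,-2,\dots,-n+1\}$, where $(\alpha)_0=1$ and $(\alpha)_k=\alpha(\alpha+1)\cdots(\alpha+k-1)$ for $k\geq1$. For the parameters considered, the zeros of $M_n(x;\beta,c)$ and of $M_{n+1}(x;\beta+1,c)$ are real and distinct. Two sets of $m$ real numbers each "interlace" if, when all $2m$ numbers are listed in increasing order, they are distinct and elements of the two sets strictly alternate. *)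

theory Defs
  imports Complex_Main
begin

text \<open>Monic Meixner polynomial M_n(x; beta, c), as a real function of x.\<close>
definition meixner :: "nat \<Rightarrow> real \<Rightarrow> real \<Rightarrow> real \<Rightarrow> real" where
  "meixner n x b c =
     (c / (c - 1)) ^ n * pochhammer b n *
     (\<Sum>k\<le>n. pochhammer (- real n) k * pochhammer (- x) k * (1 - 1 / c) ^ k
               / (pochhammer b k * fact k))"

definition interlace :: "real set \<Rightarrow> real set \<Rightarrow> bool" where
  "interlace A B \<longleftrightarrow> finite A \<and> finite B \<and> card A = card B \<and>
     (let a = sorted_list_of_set A; b = sorted_list_of_set B; m = card A in
       (\<forall>i<m. a ! i < b ! i \<and> (Suc i < m \<longrightarrow> b ! i < a ! Suc i)) \<or>
       (\<forall>i<m. b ! i < a ! i \<and> (Suc i < m \<longrightarrow> a ! i < b ! Suc i)))"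

end

theory Submission
  imports Defs "HOL-Computational_Algebra.Polynomial"
begin

text \<open>
  For beta + 1 > 0 the polynomials M_k(x; beta + 1, c) satisfy a three-term recurrence
  p_(k+1) = (x - A_k) p_k - B_k p_(k-1) with B_k > 0, so by the classical sign-change argument
  the zeros y_0 < ... < y_n of M_(n+1)(x; beta + 1, c) are real and simple, and
  (-1)^(n-i) M_n(y_i; beta + 1, c) > 0.  The contiguous relation
  M_n(x; beta) = M_n(x; beta + 1) + n c/(1-c) M_(n-1)(x; beta + 1) together with the recurrence
  gives B_n M_n(y; beta) = n c/(1-c) (y - C_n) M_n(y; beta + 1) at every zero y of
  M_(n+1)(x; beta + 1, c).  Hence the monic polynomial (x - C_n) M_n(x; beta, c) of degree n + 1
  has sign (-1)^(n-i) at y_i and sign (-1)^(n+1) near minus infinity, and the intermediate value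
  theorem places exactly one of its zeros below y_0 and one in each interval (y_(i-1), y_i).
  The hypothesis M_n(C_n; beta, c) \<noteq> 0 is what excludes y_i = C_n.
\<close>

section \<open>Polynomials with prescribed real roots\<close>

definition root_poly :: "real list \<Rightarrow> real poly" where
  "root_poly ts = (\<Prod>t\<leftarrow>ts. [:- t, 1:])"

lemma root_poly_Cons [simp]: "root_poly (t # ts) = [:- t, 1:] * root_poly ts"
  by (simp add: root_poly_def)

lemma poly_root_poly_eq_0_iff: "poly (root_poly ts) x = 0 \<longleftrightarrow> x \<in> set ts"
  by (induction ts) (auto simp: root_poly_def)

lemma degree_root_poly: "degree (root_poly ts) = length ts"
  and lead_coeff_root_poly: "lead_coeff (root_poly ts) = 1"
proof (induction ts)
  case Nil
  show "degree (root_poly []) = length []" "lead_coeff (root_poly []) = 1"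
    by (simp_all add: root_poly_def)
next
  case (Cons t ts)
  then have "root_poly ts \<noteq> 0"
    by auto
  with Cons show "degree (root_poly (t # ts)) = length (t # ts)"
    unfolding root_poly_Cons by (subst degree_mult_eq) auto
  from Cons show "lead_coeff (root_poly (t # ts)) = 1"
    unfolding root_poly_Cons lead_coeff_mult by simp
qed

lemma sign_poly_root_poly:
  assumes "x \<notin> set ts"
  shows "(-1) ^ length (filter (\<lambda>t. x < t) ts) * poly (root_poly ts) x > 0"
  using assms
proof (induction ts)
  case Nil
  then show ?case
    by (simp add: root_poly_def)
next
  case (Cons t ts)
  have "(-1) ^ length (filter (\<lambda>t. x < t) (t # ts)) * poly (root_poly (t # ts)) x
      = \<bar>x - t\<bar> * ((-1) ^ length (filter (\<lambda>t. x < t) ts) * poly (root_poly ts) x)"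
    using Cons.prems by (cases "x < t") (auto simp: algebra_simps)
  with Cons show ?case
    by simp
qed

lemma sign_root_poly_between:
  assumes "sorted_wrt (<) ts" and "i \<le> length ts"
    and "0 < i \<Longrightarrow> ts ! (i - 1) < x" and "i < length ts \<Longrightarrow> x < ts ! i"
  shows "(-1) ^ (length ts - i) * poly (root_poly ts) x > 0"
proof -
  have sorted: "sorted ts"
    using assms(1) strict_sorted_iff by blast
  have below: "t < x" if t: "t \<in> set (take i ts)" for t
  proof -
    obtain l where l: "l < length (take i ts)" "take i ts ! l = t"
      using t unfolding in_set_conv_nth by blast
    then have "t \<le> ts ! (i - 1)"
      using assms(2) sorted_nth_mono[OF sorted, of l "i - 1"] by simp
    with l assms(3) show ?thesis
      by simp
  qed
  have above: "x < t" if t: "t \<in> set (drop i ts)" for t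
  proof -
    obtain l where l: "l < length (drop i ts)" "drop i ts ! l = t"
      using t unfolding in_set_conv_nth by blast
    then have "ts ! i \<le> t"
      using sorted_nth_mono[OF sorted, of i "i + l"] by simp
    moreover have "i < length ts"
      using l by simp
    ultimately show ?thesis
      using assms(4) by simp
  qed
  have "filter (\<lambda>t. x < t) (take i ts) = []"
    using below by (metis filter_False less_asym)
  moreover have "filter (\<lambda>t. x < t) (drop i ts) = drop i ts"
    using above by (simp add: filter_id_conv)
  ultimately have "filter (\<lambda>t. x < t) ts = drop i ts"
    by (metis append_take_drop_id filter_append self_append_conv2)
  moreover have "x \<notin> set ts"
    using below above by (metis append_take_drop_id less_irrefl set_append Un_iff)
  ultimately show ?thesis
    using sign_poly_root_poly[of x ts] by simp
qed

lemma monic_eq_root_poly: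
  fixes p :: "real poly"
  assumes "degree p = length ws" and "lead_coeff p = 1" and "distinct ws"
    and "\<And>w. w \<in> set ws \<Longrightarrow> poly p w = 0"
  shows "p = root_poly ws"
proof (rule poly_eqI_degree_lead_coeff[of p "length ws" _ "set ws"])
  show "coeff p (length ws) = coeff (root_poly ws) (length ws)"
    using assms(1,2) lead_coeff_root_poly[of ws] by (simp add: degree_root_poly)
  show "length ws \<le> card (set ws)"
    using assms(3) by (simp add: distinct_card)
  show "\<And>w. w \<in> set ws \<Longrightarrow> poly p w = poly (root_poly ws) w"
    using assms(4) by (simp add: poly_root_poly_eq_0_iff)
qed (simp_all add: assms(1) degree_root_poly)

lemma monic_poly_eventually_pos:
  fixes p :: "real poly"
  assumes "lead_coeff p = 1"
  obtains M where "\<And>x. M \<le> x \<Longrightarrow> poly p x > 0"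
proof -
  obtain M where "\<forall>x\<ge>M. poly p x \<ge> lead_coeff p"
    using poly_pinfty_gt_lc[of p] assms by auto
  with assms that show ?thesis
    by force
qed

lemma monic_poly_sign_at_bot:
  fixes p :: "real poly"
  assumes "lead_coeff p = 1"
  obtains M where "\<And>x. x \<le> M \<Longrightarrow> (-1) ^ degree p * poly p x > 0"
proof -
  define q where "q = smult ((-1) ^ degree p) (p \<circ>\<^sub>p [:0, -1:])"
  have "lead_coeff (p \<circ>\<^sub>p [:0, -1:]) = (-1) ^ degree p"
    using lead_coeff_comp[of "[:0, -1::real:]" p] assms by simp
  then have "lead_coeff q = 1"
    by (simp add: q_def power_mult_distrib[symmetric])
  then obtain M where M: "\<And>x. M \<le> x \<Longrightarrow> poly q x > 0"
    using monic_poly_eventually_pos by blast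
  have "(-1) ^ degree p * poly p x > 0" if "x \<le> - M" for x
    using M[of "- x"] that by (simp add: q_def poly_pcompose)
  with that show ?thesis
    by blast
qed

lemma alternating_signs_mult_neg:
  fixes u v :: real
  assumes "(-1) ^ Suc e * u > 0" and "(-1) ^ e * v > 0"
  shows "u * v < 0"
  using assms by (cases "even e") (auto intro: mult_neg_pos mult_pos_neg)

lemma same_sign_mult_pos:
  fixes s u v :: real
  assumes "0 < s * v" and "0 < u * v"
  shows "0 < s * u"
  using assms by (auto simp: zero_less_mult_iff)

definition interleaved :: "real list \<Rightarrow> real list \<Rightarrow> bool" where
  "interleaved xs ys \<longleftrightarrow>
     (\<forall>i < length ys. xs ! i < ys ! i \<and> (Suc i < length xs \<longrightarrow> ys ! i < xs ! Suc i))"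

lemma root_below_sign_change:
  fixes p :: "real poly"
  assumes "degree p = length ys" and "lead_coeff p = 1" and "sorted_wrt (<) ys"
    and sign: "\<And>i. i < length ys \<Longrightarrow> (-1) ^ (length ys - 1 - i) * poly p (ys ! i) > 0"
    and "i < length ys"
  obtains z where "poly p z = 0" "z < ys ! i" "0 < i \<Longrightarrow> ys ! (i - 1) < z"
proof (cases i)
  case 0
  have "degree p = Suc (length ys - 1)"
    using assms(1,5) by simp
  then obtain M where M: "\<And>x. x \<le> M \<Longrightarrow> (-1) ^ Suc (length ys - 1) * poly p x > 0"
    using monic_poly_sign_at_bot[OF assms(2)] by metis
  define x0 where "x0 = min M (ys ! 0 - 1)"
  have "(-1) ^ Suc (length ys - 1) * poly p x0 > 0"
    using M unfolding x0_def by simp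
  moreover have "(-1) ^ (length ys - 1) * poly p (ys ! 0) > 0"
    using sign[of 0] assms(5) 0 by simp
  ultimately have "poly p x0 * poly p (ys ! 0) < 0"
    by (rule alternating_signs_mult_neg)
  moreover have "x0 < ys ! 0"
    unfolding x0_def by linarith
  ultimately obtain z where "poly p z = 0" "z < ys ! 0"
    using poly_IVT by blast
  with 0 that show ?thesis
    by blast
next
  case (Suc j)
  have "length ys - 1 - j = Suc (length ys - 1 - i)"
    using assms(5) Suc by simp
  then have "poly p (ys ! j) * poly p (ys ! i) < 0"
    using sign[of j] sign[of i] assms(5) Suc by (intro alternating_signs_mult_neg) simp_all
  moreover have "ys ! j < ys ! i"
    using assms(3,5) Suc by (simp add: sorted_wrt_nth_less)
  ultimately obtain z where "ys ! j < z" "z < ys ! i" "poly p z = 0"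
    using poly_IVT by blast
  with Suc that show ?thesis
    by simp
qed

lemma roots_interleave_of_sign_changes:
  fixes p :: "real poly"
  assumes "degree p = length ys" and "lead_coeff p = 1" and "sorted_wrt (<) ys"
    and sign: "\<And>i. i < length ys \<Longrightarrow> (-1) ^ (length ys - 1 - i) * poly p (ys ! i) > 0"
  obtains zs where "p = root_poly zs" "sorted_wrt (<) zs" "length zs = length ys" "interleaved zs ys"
proof -
  have "\<exists>z. poly p z = 0 \<and> z < ys ! i \<and> (0 < i \<longrightarrow> ys ! (i - 1) < z)" if "i < length ys" for i
    using root_below_sign_change[OF assms that] by metis
  then obtain w where w: "\<And>i. i < length ys
      \<Longrightarrow> poly p (w i) = 0 \<and> w i < ys ! i \<and> (0 < i \<longrightarrow> ys ! (i - 1) < w i)"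
    by metis
  have below: "w i < ys ! i" if "i < length ys" for i
    using w[OF that] by blast
  have above: "ys ! i < w (Suc i)" if "Suc i < length ys" for i
    using w[OF that] by simp
  define zs where "zs = map w [0..<length ys]"
  have "interleaved zs ys"
    unfolding interleaved_def zs_def using below above by (simp del: upt_Suc)
  moreover have "sorted_wrt (<) zs"
    unfolding sorted_wrt_iff_nth_Suc_transp[OF transp_on_less] zs_def
    using below above by (auto simp del: upt_Suc intro: less_trans)
  moreover have "length zs = length ys"
    by (simp add: zs_def)
  moreover have "p = root_poly zs"
    using \<open>sorted_wrt (<) zs\<close> w assms(1,2) \<open>length zs = length ys\<close>
    by (intro monic_eq_root_poly) (auto simp: strict_sorted_iff zs_def)
  ultimately show ?thesis
    using that by blast
qed

lemma roots_interleave_of_sign_changes_Suc: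
  fixes p :: "real poly"
  assumes "degree p = Suc (length ys)" and "lead_coeff p = 1" and "sorted_wrt (<) ys"
    and sign: "\<And>i. i < length ys \<Longrightarrow> (-1) ^ (length ys - i) * poly p (ys ! i) > 0"
  obtains zs where "p = root_poly zs" "sorted_wrt (<) zs" "length zs = Suc (length ys)"
    "interleaved zs ys"
proof -
  obtain M where M: "\<And>x. M \<le> x \<Longrightarrow> poly p x > 0"
    using monic_poly_eventually_pos[OF assms(2)] by blast
  \<comment> \<open>a point to the right of all ys where p is positive supplies the last sign change\<close>
  define y where "y = max M (Max (set ys) + 1)"
  define ys' where "ys' = ys @ [y]"
  have "x < y" if "x \<in> set ys" for x
  proof -
    have "x \<le> Max (set ys)"
      using that by simp
    then show ?thesis
      unfolding y_def by linarith
  qed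
  then have "sorted_wrt (<) ys'"
    using assms(3) unfolding ys'_def by (simp add: sorted_wrt_append)
  moreover have "(-1) ^ (length ys' - 1 - i) * poly p (ys' ! i) > 0" if "i < length ys'" for i
    using that sign M[of y] unfolding ys'_def y_def by (cases "i < length ys") (auto simp: nth_append)
  ultimately obtain zs where zs: "p = root_poly zs" "sorted_wrt (<) zs" "length zs = length ys'"
    "interleaved zs ys'"
    using roots_interleave_of_sign_changes assms(1,2) unfolding ys'_def by (metis length_append_singleton)
  have "interleaved zs ys"
    unfolding interleaved_def
  proof (intro allI impI)
    fix i assume "i < length ys"
    then have "ys' ! i = ys ! i" "i < length ys'"
      unfolding ys'_def by (simp_all add: nth_append)
    then show "zs ! i < ys ! i \<and> (Suc i < length zs \<longrightarrow> ys ! i < zs ! Suc i)"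
      using zs(4) unfolding interleaved_def by metis
  qed
  with zs that show ?thesis
    unfolding ys'_def by simp
qed

lemma sign_root_poly_interleaved:
  assumes "sorted_wrt (<) ts" and "interleaved ys ts" and "length ys = Suc (length ts)"
    and "i < length ys"
  shows "(-1) ^ (length ts - i) * poly (root_poly ts) (ys ! i) > 0"
proof (rule sign_root_poly_between[OF assms(1)])
  show "0 < i \<Longrightarrow> ts ! (i - 1) < ys ! i"
    using assms(2-4) unfolding interleaved_def by (metis Suc_pred' Suc_less_SucD)
  show "i < length ts \<Longrightarrow> ys ! i < ts ! i"
    using assms(2) unfolding interleaved_def by blast
qed (use assms(3,4) in simp)

lemma strict_sorted_list_of_set_set:
  "sorted_wrt (<) xs \<Longrightarrow> sorted_list_of_set (set xs) = (xs :: real list)"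
  by (simp add: sorted_list_of_set_sort_remdups strict_sorted_iff distinct_remdups_id sorted_sort_id)

lemma interlace_set_interleaved:
  assumes "sorted_wrt (<) xs" "sorted_wrt (<) ys" and "length xs = length ys" and "interleaved xs ys"
  shows "interlace (set xs) (set ys)"
proof -
  have "card (set xs) = length xs" "card (set ys) = length ys"
    using assms(1,2) by (simp_all add: distinct_card strict_sorted_iff)
  then show ?thesis
    using assms unfolding interlace_def interleaved_def Let_def
    by (simp add: strict_sorted_list_of_set_set)
qed

section \<open>Zeros of polynomials defined by a three-term recurrence\<close>

fun orth_poly :: "(nat \<Rightarrow> real) \<Rightarrow> (nat \<Rightarrow> real) \<Rightarrow> nat \<Rightarrow> real poly" where
  "orth_poly A B 0 = 1"
| "orth_poly A B (Suc 0) = [:- A 0, 1:]"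
| "orth_poly A B (Suc (Suc k)) =
     [:- A (Suc k), 1:] * orth_poly A B (Suc k) - smult (B (Suc k)) (orth_poly A B k)"

lemma degree_orth_poly: "degree (orth_poly A B k) = k"
  and lead_coeff_orth_poly: "lead_coeff (orth_poly A B k) = 1"
proof -
  have "degree (orth_poly A B k) \<le> k \<and> coeff (orth_poly A B k) k = 1"
  proof (induction A B k rule: orth_poly.induct)
    case (3 A B k)
    let ?P = "orth_poly A B"
    have "[:- A (Suc k), 1:] * ?P (Suc k) = pCons 0 (?P (Suc k)) - smult (A (Suc k)) (?P (Suc k))"
      by simp
    moreover have "degree (pCons 0 (?P (Suc k))) \<le> Suc (Suc k)"
      using 3 by (simp add: degree_pCons_le)
    ultimately have "degree ([:- A (Suc k), 1:] * ?P (Suc k)) \<le> Suc (Suc k)"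
      using 3 degree_smult_le[of "A (Suc k)" "?P (Suc k)"]
      by (metis degree_diff_le le_SucI order_trans)
    moreover have "degree (smult (B (Suc k)) (?P k)) \<le> Suc (Suc k)"
      using 3 degree_smult_le[of "B (Suc k)" "?P k"] by simp
    moreover have "coeff (?P (Suc k)) (Suc (Suc k)) = 0" "coeff (?P k) (Suc (Suc k)) = 0"
      using 3 by (simp_all add: coeff_eq_0)
    ultimately show ?case
      using 3 by (simp add: degree_diff_le)
  qed simp_all
  then show "degree (orth_poly A B k) = k" "lead_coeff (orth_poly A B k) = 1"
    by (metis le_antisym le_degree one_neq_zero)+
qed

lemma sign_orth_poly_at_roots_of_predecessor:
  assumes "orth_poly A B k = root_poly ts" "orth_poly A B (Suc k) = root_poly ys"
    and "sorted_wrt (<) ts" "interleaved ys ts" "length ts = k" "length ys = Suc k"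
    and "B (Suc k) > 0" and "i < length ys"
  shows "(-1) ^ (length ys - i) * poly (orth_poly A B (Suc (Suc k))) (ys ! i) > 0"
proof -
  have "poly (root_poly ys) (ys ! i) = 0"
    using assms(8) by (simp add: poly_root_poly_eq_0_iff)
  then have "poly (orth_poly A B (Suc (Suc k))) (ys ! i) = - B (Suc k) * poly (root_poly ts) (ys ! i)"
    using assms(1,2) by simp
  moreover have "(-1 :: real) ^ (length ys - i) = - ((-1) ^ (k - i))"
    using assms(6,8) by (simp add: Suc_diff_le)
  ultimately have "(-1) ^ (length ys - i) * poly (orth_poly A B (Suc (Suc k))) (ys ! i)
      = B (Suc k) * ((-1) ^ (k - i) * poly (root_poly ts) (ys ! i))"
    by simp
  moreover have "(-1) ^ (k - i) * poly (root_poly ts) (ys ! i) > 0"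
    using sign_root_poly_interleaved[OF assms(3,4)] assms(5,6,8) by simp
  ultimately show ?thesis
    using assms(7) by simp
qed

lemma orth_poly_roots_interleave:
  assumes "\<And>j. B (Suc j) > 0"
  obtains ts ys where "orth_poly A B k = root_poly ts" "orth_poly A B (Suc k) = root_poly ys"
    "sorted_wrt (<) ts" "sorted_wrt (<) ys" "length ts = k" "length ys = Suc k" "interleaved ys ts"
proof -
  have "\<exists>ts ys. orth_poly A B k = root_poly ts \<and> orth_poly A B (Suc k) = root_poly ys
    \<and> sorted_wrt (<) ts \<and> sorted_wrt (<) ys \<and> length ts = k \<and> length ys = Suc k \<and> interleaved ys ts"
  proof (induction k)
    case 0
    show ?case
      by (rule exI[of _ "[]"], rule exI[of _ "[A 0]"]) (simp add: root_poly_def interleaved_def)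
  next
    case (Suc k)
    then obtain ts ys where IH: "orth_poly A B k = root_poly ts" "orth_poly A B (Suc k) = root_poly ys"
      "sorted_wrt (<) ts" "sorted_wrt (<) ys" "length ts = k" "length ys = Suc k" "interleaved ys ts"
      by blast
    have "degree (orth_poly A B (Suc (Suc k))) = Suc (length ys)"
      by (simp only: degree_orth_poly IH(6))
    moreover note lead_coeff_orth_poly IH(4)
    moreover note sign_orth_poly_at_roots_of_predecessor[OF IH(1,2,3,7,5,6) assms]
    ultimately obtain zs where "orth_poly A B (Suc (Suc k)) = root_poly zs" "sorted_wrt (<) zs"
      "length zs = Suc (length ys)" "interleaved zs ys"
      by (rule roots_interleave_of_sign_changes_Suc)
    with IH show ?case
      by auto
  qed
  with that show ?thesis
    by blast
qed

section \<open>Meixner polynomials\<close>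

definition meixner_coeff :: "real \<Rightarrow> real \<Rightarrow> nat \<Rightarrow> nat \<Rightarrow> real" where
  "meixner_coeff a c m j =
     (-1) ^ j * real (m choose j) * pochhammer (a + real j) (m - j) * (c / (c - 1)) ^ (m - j)"

definition meixner_A :: "real \<Rightarrow> real \<Rightarrow> nat \<Rightarrow> real" where
  "meixner_A a c m = (real m + (real m + a) * c) / (1 - c)"

definition meixner_B :: "real \<Rightarrow> real \<Rightarrow> nat \<Rightarrow> real" where
  "meixner_B a c m = real m * (real m + a - 1) * c / (1 - c) ^ 2"

lemma meixner_A_B_eq:
  assumes "c \<noteq> 1"
  shows "meixner_A a c m = real m - (2 * real m + a) * (c / (c - 1))"
    and "meixner_B a c m = real m * (real m + a - 1) * (c / (c - 1)) * (c / (c - 1) - 1)"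
  using assms by (simp_all add: meixner_A_def meixner_B_def field_simps power2_eq_square)

lemma pochhammer_minus_of_nat_div_fact:
  "pochhammer (- real m) j / fact j = (-1) ^ j * real (m choose j)"
proof -
  have "real m gchoose j = (-1) ^ j * pochhammer (- real m) j / fact j"
    by (simp add: gbinomial_pochhammer)
  then show ?thesis
    by (simp add: binomial_gbinomial power_mult_distrib[symmetric])
qed

lemma meixner_eq_sum_coeff:
  assumes "\<And>k. pochhammer a k \<noteq> 0" and "c \<noteq> 0" "c \<noteq> 1"
  shows "meixner m x a c = (\<Sum>j\<le>m. meixner_coeff a c m j * pochhammer (- x) j)"
proof -
  have "(c / (c - 1)) ^ m * pochhammer a m *
        (pochhammer (- real m) j * pochhammer (- x) j * (1 - 1 / c) ^ j / (pochhammer a j * fact j))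
      = meixner_coeff a c m j * pochhammer (- x) j" (is "?term = _") if "j \<le> m" for j
  proof -
    obtain s where m: "m = j + s"
      using \<open>j \<le> m\<close> le_Suc_ex by blast
    have "(c / (c - 1)) * (1 - 1 / c) = 1"
      using assms(2,3) by (simp add: field_simps)
    then have "(c / (c - 1)) ^ j * (1 - 1 / c) ^ j = 1"
      by (metis power_mult_distrib power_one)
    then have u: "(c / (c - 1)) ^ m * (1 - 1 / c) ^ j = (c / (c - 1)) ^ s"
      by (simp add: m power_add)
    have p: "pochhammer a m / pochhammer a j = pochhammer (a + real j) s"
      using assms(1) by (simp add: m pochhammer_product')
    have "?term = ((c / (c - 1)) ^ m * (1 - 1 / c) ^ j) * (pochhammer a m / pochhammer a j)
          * (pochhammer (- real m) j / fact j) * pochhammer (- x) j"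
      by (simp add: field_simps)
    also have "\<dots> = meixner_coeff a c m j * pochhammer (- x) j"
      unfolding u p pochhammer_minus_of_nat_div_fact by (simp add: meixner_coeff_def m)
    finally show ?thesis .
  qed
  then show ?thesis
    unfolding meixner_def sum_distrib_left by (intro sum.cong) auto
qed

lemma meixner_coeff_eq_0: "m < j \<Longrightarrow> meixner_coeff a c m j = 0"
  by (simp add: meixner_coeff_def)

lemma sum_meixner_coeff_extend:
  assumes "m \<le> M"
  shows "(\<Sum>j\<le>m. meixner_coeff a c m j * g j) = (\<Sum>j\<le>M. meixner_coeff a c m j * g j)"
  by (rule sum.mono_neutral_left) (use assms in \<open>auto simp: meixner_coeff_eq_0\<close>)

lemma binomial_Suc_ratio:
  "real (Suc n - k) * real (Suc n choose k) = real (Suc n) * real (n choose k)"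
  using binomial_absorb_comp[of "Suc n" k] by (metis diff_Suc_1 of_nat_mult)

lemma meixner_coeff_Suc_degree:
  "(real s + 1) * meixner_coeff a c (j + s + 1) j
     = (real j + real s + 1) * (a + real j + real s) * (c / (c - 1)) * meixner_coeff a c (j + s) j"
proof -
  have "(real s + 1) * real (Suc (j + s) choose j) = (real j + real s + 1) * real (j + s choose j)"
    using binomial_Suc_ratio[of "j + s" j] by (simp add: Suc_diff_le add_ac)
  moreover have "pochhammer (a + real j) (Suc s) = pochhammer (a + real j) s * (a + real j + real s)"
    by (simp add: pochhammer_Suc)
  ultimately show ?thesis
    unfolding meixner_coeff_def by (simp add: Suc_diff_le mult_ac)
qed

lemma meixner_coeff_pred_index:
  assumes "0 < j"
  shows "(real s + 2) * meixner_coeff a c (j + s + 1) (j - 1)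
     = - real j * (a + real j - 1) * (c / (c - 1)) * meixner_coeff a c (j + s + 1) j"
proof -
  obtain i where j: "j = Suc i"
    using assms gr0_implies_Suc by blast
  define u where "u = c / (c - 1)"
  define P where "P = pochhammer (a + real j) (Suc s)"
  define Ci where "Ci = real (Suc (j + s) choose i)"
  define Cj where "Cj = real (Suc (j + s) choose j)"
  have "Suc (Suc s) * (Suc (j + s) choose i) = j * (Suc (j + s) choose j)"
    using Suc_times_binomial_add[of i "Suc s"] by (simp add: j)
  then have "(real s + 2) * Ci = real j * Cj"
    unfolding Ci_def Cj_def by (metis add_2_eq_Suc' of_nat_add of_nat_mult of_nat_numeral)
  then have Ci: "Ci = real j * Cj / (real s + 2)"
    by (simp add: field_simps add_pos_nonneg)
  have "pochhammer (a + real i) (Suc (Suc s)) = (a + real i) * pochhammer (a + real i + 1) (Suc s)"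
    by (rule pochhammer_rec)
  then have lhs: "meixner_coeff a c (j + s + 1) (j - 1)
      = (-1) ^ i * Ci * ((a + real j - 1) * P) * u ^ Suc (Suc s)"
    by (simp add: meixner_coeff_def j u_def P_def Ci_def add_ac)
  have rhs: "meixner_coeff a c (j + s + 1) j = - ((-1) ^ i * Cj * P * u ^ Suc s)"
    by (simp add: meixner_coeff_def j u_def P_def Cj_def)
  show ?thesis
    unfolding lhs rhs Ci u_def[symmetric] by (simp add: field_simps add_pos_nonneg)
qed

lemma meixner_coeff_recurrence_interior:
  assumes "c \<noteq> 1"
  shows "meixner_coeff a c (j + s + 2) j
       = meixner_coeff a c (j + s + 1) j * (real j - meixner_A a c (j + s + 1))
         - (if j = 0 then 0 else meixner_coeff a c (j + s + 1) (j - 1))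
         - meixner_B a c (j + s + 1) * meixner_coeff a c (j + s) j" (is "_ = ?rhs")
proof -
  \<comment> \<open>after scaling by (s + 1)(s + 2) all four coefficients are multiples of R\<close>
  define u where "u = c / (c - 1)"
  define R where "R = meixner_coeff a c (j + s) j"
  have T1: "(real s + 1) * meixner_coeff a c (j + s + 1) j
      = (real j + real s + 1) * (a + real j + real s) * u * R"
    unfolding u_def R_def by (rule meixner_coeff_Suc_degree)
  have "(real s + 2) * meixner_coeff a c (j + (s + 1) + 1) j
      = (real j + real s + 2) * (a + real j + real s + 1) * u * meixner_coeff a c (j + (s + 1)) j"
    using meixner_coeff_Suc_degree[of "s + 1" a c j] unfolding u_def by (simp add: add_ac)
  then have T2: "(real s + 1) * (real s + 2) * meixner_coeff a c (j + s + 2) j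
      = (real j + real s + 2) * (a + real j + real s + 1) * u
        * ((real s + 1) * meixner_coeff a c (j + s + 1) j)"
    by (simp add: mult_ac)
  have Tm: "(real s + 1) * (real s + 2) * (if j = 0 then 0 else meixner_coeff a c (j + s + 1) (j - 1))
      = - real j * (a + real j - 1) * u * ((real s + 1) * meixner_coeff a c (j + s + 1) j)"
    using meixner_coeff_pred_index[of j s a c] unfolding u_def
    by (cases "j = 0") (simp_all add: mult_ac)
  have "(real s + 1) * (real s + 2) * ?rhs
      = (real s + 2) * ((real s + 1) * meixner_coeff a c (j + s + 1) j)
          * (real j - meixner_A a c (j + s + 1))
        - (real s + 1) * (real s + 2) * (if j = 0 then 0 else meixner_coeff a c (j + s + 1) (j - 1))
        - (real s + 1) * (real s + 2) * meixner_B a c (j + s + 1) * R"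
    unfolding R_def by (simp only: algebra_simps)
  also have "\<dots> = (real s + 1) * (real s + 2) * meixner_coeff a c (j + s + 2) j"
    unfolding T2 Tm T1 meixner_A_B_eq[OF assms] u_def[symmetric] of_nat_add of_nat_1 by algebra
  finally show ?thesis
    by simp
qed

lemma meixner_coeff_recurrence:
  assumes "c \<noteq> 1" and "j \<le> k + 2"
  shows "meixner_coeff a c (k + 2) j
       = meixner_coeff a c (k + 1) j * (real j - meixner_A a c (k + 1))
         - (if j = 0 then 0 else meixner_coeff a c (k + 1) (j - 1))
         - meixner_B a c (k + 1) * meixner_coeff a c k j"
proof -
  consider "j = k + 2" | "j = k + 1" | "j \<le> k"
    using assms(2) by linarith
  then show ?thesis
  proof cases
    case 1
    then show ?thesis
      by (simp add: meixner_coeff_def binomial_eq_0 del: binomial_Suc_Suc)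
  next
    case 2
    define u where "u = c / (c - 1)"
    have "meixner_coeff a c (k + 2) j = (-1) ^ Suc k * (real k + 2) * (a + real k + 1) * u"
      using 2 by (simp add: meixner_coeff_def u_def add_ac)
    moreover have "meixner_coeff a c (k + 1) j = (-1) ^ Suc k"
      using 2 by (simp add: meixner_coeff_def)
    moreover have "meixner_coeff a c (k + 1) (j - 1) = (-1) ^ k * (real k + 1) * (a + real k) * u"
      using 2 by (simp add: meixner_coeff_def u_def add_ac)
    moreover have "meixner_coeff a c k j = 0"
      using 2 by (simp add: meixner_coeff_eq_0)
    ultimately show ?thesis
      using 2 unfolding meixner_A_B_eq[OF assms(1)] u_def[symmetric] by (simp add: algebra_simps)
  next
    case 3
    then obtain s where "k = j + s"
      using le_Suc_ex by blast
    then show ?thesis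
      using meixner_coeff_recurrence_interior[OF assms(1), of a j s] by (simp add: add_ac)
  qed
qed

lemma x_mult_sum_pochhammer_minus:
  "(x - A) * (\<Sum>j\<le>m. f j * pochhammer (- x) j)
     = (\<Sum>j\<le>Suc m. (f j * (real j - A) - (if j = 0 then 0 else f (j - 1))) * pochhammer (- x) j)
       - f (Suc m) * (real (Suc m) - A) * pochhammer (- x) (Suc m)"
proof -
  have "(x - A) * pochhammer (- x) j = (real j - A) * pochhammer (- x) j - pochhammer (- x) (Suc j)" for j
    by (simp add: pochhammer_Suc algebra_simps)
  then have "(x - A) * (\<Sum>j\<le>m. f j * pochhammer (- x) j)
      = (\<Sum>j\<le>m. f j * ((real j - A) * pochhammer (- x) j - pochhammer (- x) (Suc j)))"
    by (simp add: sum_distrib_left mult.left_commute)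
  also have "\<dots> = (\<Sum>j\<le>m. f j * (real j - A) * pochhammer (- x) j)
      - (\<Sum>j\<le>m. f j * pochhammer (- x) (Suc j))"
    by (simp add: sum_subtractf[symmetric] algebra_simps)
  also have "(\<Sum>j\<le>m. f j * pochhammer (- x) (Suc j))
      = (\<Sum>j\<le>Suc m. (if j = 0 then 0 else f (j - 1)) * pochhammer (- x) j)"
    by (subst sum.atMost_Suc_shift) simp
  finally show ?thesis
    by (simp add: sum_subtractf[symmetric] left_diff_distrib)
qed

lemma meixner_three_term_recurrence:
  assumes "\<And>k. pochhammer a k \<noteq> 0" and "c \<noteq> 0" "c \<noteq> 1"
  shows "meixner (k + 2) x a c
       = (x - meixner_A a c (k + 1)) * meixner (k + 1) x a c - meixner_B a c (k + 1) * meixner k x a c"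
proof -
  define A where "A = meixner_A a c (k + 1)"
  define B where "B = meixner_B a c (k + 1)"
  define T where "T = meixner_coeff a c"
  note M = meixner_eq_sum_coeff[OF assms, folded T_def]
  have "(x - A) * meixner (k + 1) x a c - B * meixner k x a c
      = (\<Sum>j\<le>k + 2. (T (k + 1) j * (real j - A) - (if j = 0 then 0 else T (k + 1) (j - 1))
          - B * T k j) * pochhammer (- x) j)"
  proof -
    have "(x - A) * meixner (k + 1) x a c
        = (\<Sum>j\<le>k + 2. (T (k + 1) j * (real j - A) - (if j = 0 then 0 else T (k + 1) (j - 1)))
            * pochhammer (- x) j)"
      unfolding M x_mult_sum_pochhammer_minus by (simp add: T_def meixner_coeff_eq_0)
    moreover have "B * meixner k x a c = (\<Sum>j\<le>k + 2. B * T k j * pochhammer (- x) j)"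
      unfolding M T_def sum_meixner_coeff_extend[of k "k + 2", OF le_add1] sum_distrib_left
      by (simp only: mult.assoc)
    ultimately show ?thesis
      by (simp add: sum_subtractf[symmetric] left_diff_distrib)
  qed
  also have "\<dots> = meixner (k + 2) x a c"
    unfolding M
  proof (intro sum.cong refl)
    fix j assume "j \<in> {..k + 2}"
    then show "(T (k + 1) j * (real j - A) - (if j = 0 then 0 else T (k + 1) (j - 1)) - B * T k j)
        * pochhammer (- x) j = T (k + 2) j * pochhammer (- x) j"
      unfolding T_def A_def B_def using meixner_coeff_recurrence[OF assms(3), of j k a] by simp
  qed
  finally show ?thesis
    unfolding A_def B_def by (rule sym)
qed

lemma meixner_coeff_contiguous:
  assumes "c \<noteq> 1" and "j \<le> n" "1 \<le> n"
  shows "meixner_coeff b c n j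
       = meixner_coeff (b + 1) c n j + real n * c / (1 - c) * meixner_coeff (b + 1) c (n - 1) j"
proof (cases "j = n")
  case True
  then show ?thesis
    using assms by (simp add: meixner_coeff_def)
next
  case False
  then obtain s where n: "n = Suc (j + s)"
    using assms(2) by (metis le_neq_implies_less less_imp_Suc_add)
  define u where "u = c / (c - 1)"
  define P where "P = pochhammer (b + 1 + real j) s"
  define C0 where "C0 = real (j + s choose j)"
  define C1 where "C1 = real (Suc (j + s) choose j)"
  have "pochhammer (b + real j) (Suc s) = (b + real j) * P"
    unfolding P_def by (simp add: pochhammer_rec add_ac)
  then have coeff_b: "meixner_coeff b c n j = (-1) ^ j * C1 * (b + real j) * P * u ^ Suc s"
    by (simp add: meixner_coeff_def n u_def C1_def Suc_diff_le)
  have coeff_b1: "meixner_coeff (b + 1) c n j = (-1) ^ j * C1 * (b + 1 + real j + real s) * P * u ^ Suc s"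
    by (simp add: meixner_coeff_def n u_def P_def C1_def Suc_diff_le pochhammer_Suc add_ac)
  have coeff_b1_pred: "meixner_coeff (b + 1) c (n - 1) j = (-1) ^ j * C0 * P * u ^ s"
    by (simp add: meixner_coeff_def n u_def P_def C0_def add_ac)
  have factor: "real n * c / (1 - c) = - (real j + real s + 1) * u"
    using assms(1) by (simp add: n u_def field_simps)
  have C0: "C0 = (real s + 1) * C1 / (real j + real s + 1)"
    using binomial_Suc_ratio[of "j + s" j] unfolding C0_def C1_def
    by (simp add: field_simps add_pos_nonneg)
  show ?thesis
    unfolding coeff_b coeff_b1 coeff_b1_pred factor C0 by (simp add: field_simps)
qed

lemma meixner_contiguous:
  assumes "\<And>k. pochhammer b k \<noteq> 0" "\<And>k. pochhammer (b + 1) k \<noteq> 0"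
    and "c \<noteq> 0" "c \<noteq> 1" and "1 \<le> n"
  shows "meixner n x b c = meixner n x (b + 1) c + real n * c / (1 - c) * meixner (n - 1) x (b + 1) c"
proof -
  have "meixner n x b c = (\<Sum>j\<le>n. (meixner_coeff (b + 1) c n j
      + real n * c / (1 - c) * meixner_coeff (b + 1) c (n - 1) j) * pochhammer (- x) j)"
    unfolding meixner_eq_sum_coeff[OF assms(1,3,4)]
    using meixner_coeff_contiguous[OF assms(4) _ assms(5), where b = b] by (intro sum.cong) simp_all
  also have "\<dots> = meixner n x (b + 1) c
      + real n * c / (1 - c) * (\<Sum>j\<le>n. meixner_coeff (b + 1) c (n - 1) j * pochhammer (- x) j)"
    unfolding meixner_eq_sum_coeff[OF assms(2-4)]
    by (simp add: sum.distrib sum_distrib_left distrib_right mult.assoc)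
  also have "(\<Sum>j\<le>n. meixner_coeff (b + 1) c (n - 1) j * pochhammer (- x) j)
      = meixner (n - 1) x (b + 1) c"
    unfolding meixner_eq_sum_coeff[OF assms(2-4)] by (rule sum_meixner_coeff_extend[symmetric]) simp
  finally show ?thesis .
qed

lemma meixner_eq_poly_orth_poly:
  assumes "\<And>k. pochhammer a k \<noteq> 0" and "c \<noteq> 0" "c \<noteq> 1"
  shows "meixner k x a c = poly (orth_poly (meixner_A a c) (meixner_B a c) k) x"
proof (induction k rule: induct_nat_012)
  case 0
  show ?case
    by (simp add: meixner_def)
next
  case 1
  have "a \<noteq> 0"
    using assms(1)[of 1] by simp
  with assms(2,3) show ?case
    by (simp add: meixner_def meixner_A_def field_simps)
next
  case (ge2 k)
  then show ?case
    using meixner_three_term_recurrence[OF assms, of k x]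
    by (simp add: numeral_2_eq_2 left_diff_distrib)
qed

lemma pochhammer_neq_0_of_gt_minus_one:
  fixes b :: real
  assumes "-1 < b" and "b \<noteq> 0"
  shows "pochhammer b k \<noteq> 0"
  using assms by (auto simp: pochhammer_eq_0_iff)

lemma meixner_B_pos:
  assumes "0 < a" and "0 < c" "c < 1"
  shows "0 < meixner_B a c (Suc j)"
  using assms by (simp add: meixner_B_def)

lemma meixner_at_zero_of_successor:
  assumes "\<And>k. pochhammer b k \<noteq> 0" "\<And>k. pochhammer (b + 1) k \<noteq> 0"
    and "c \<noteq> 0" "c \<noteq> 1" and "1 \<le> n"
    and "meixner (n + 1) y (b + 1) c = 0"
  shows "meixner_B (b + 1) c n * meixner n y b c
       = real n * c / (1 - c) * (y - (- b + real (n + 1) * c / (1 - c))) * meixner n y (b + 1) c"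
proof -
  define \<alpha> where "\<alpha> = real n * c / (1 - c)"
  define A where "A = meixner_A (b + 1) c n"
  define B where "B = meixner_B (b + 1) c n"
  have "meixner (n + 1) y (b + 1) c = (y - A) * meixner n y (b + 1) c - B * meixner (n - 1) y (b + 1) c"
    using meixner_three_term_recurrence[OF assms(2-4), of "n - 1" y] assms(5)
    by (simp add: A_def B_def Suc_diff_le)
  moreover have "meixner n y b c = meixner n y (b + 1) c + \<alpha> * meixner (n - 1) y (b + 1) c"
    unfolding \<alpha>_def by (rule meixner_contiguous[OF assms(1-5)])
  moreover have "\<alpha> * (A - (- b + real (n + 1) * c / (1 - c))) = B"
  proof -
    define u where "u = c / (c - 1)"
    have cu: "r * c / (1 - c) = - r * u" for r
      using assms(4) by (simp add: u_def field_simps)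
    show ?thesis
      unfolding \<alpha>_def A_def B_def meixner_A_B_eq[OF assms(4)] u_def[symmetric] cu of_nat_add of_nat_1
      by algebra
  qed
  ultimately show ?thesis
    using assms(6) unfolding \<alpha>_def[symmetric] B_def[symmetric] by algebra
qed

lemma meixner_sign_at_zero_of_successor:
  assumes "-1 < b" "b \<noteq> 0" and "0 < c" "c < 1" and "1 \<le> n"
    and "meixner n (- b + real (n + 1) * c / (1 - c)) b c \<noteq> 0"
    and "meixner (n + 1) y (b + 1) c = 0" and "meixner n y (b + 1) c \<noteq> 0"
  shows "0 < (y - (- b + real (n + 1) * c / (1 - c))) * meixner n y b c * meixner n y (b + 1) c"
proof -
  define C where "C = - b + real (n + 1) * c / (1 - c)"
  define \<alpha> where "\<alpha> = real n * c / (1 - c)"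
  define B where "B = meixner_B (b + 1) c n"
  have "B > 0" "\<alpha> > 0"
    using meixner_B_pos[of "b + 1" c "n - 1"] assms(1-5) by (simp_all add: B_def \<alpha>_def)
  have key: "B * meixner n y b c = \<alpha> * (y - C) * meixner n y (b + 1) c"
    unfolding B_def \<alpha>_def C_def
    using assms(1-5,7) by (intro meixner_at_zero_of_successor pochhammer_neq_0_of_gt_minus_one) auto
  have "y \<noteq> C"
  proof
    assume "y = C"
    with key \<open>B > 0\<close> assms(6) show False
      unfolding C_def by simp
  qed
  have "B * ((y - C) * meixner n y b c * meixner n y (b + 1) c)
      = \<alpha> * ((y - C) * meixner n y (b + 1) c)\<^sup>2"
    using key by (simp add: power2_eq_square ac_simps)
  moreover have "\<alpha> * ((y - C) * meixner n y (b + 1) c)\<^sup>2 > 0"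
    using \<open>\<alpha> > 0\<close> \<open>y \<noteq> C\<close> assms(8) by simp
  ultimately show ?thesis
    using \<open>B > 0\<close> zero_less_mult_pos unfolding C_def[symmetric] by metis
qed

lemma meixner_zeros_alternate:
  assumes "0 < a" and "0 < c" "c < 1"
  obtains ys where "{x. meixner (Suc n) x a c = 0} = set ys" "sorted_wrt (<) ys" "length ys = Suc n"
    "\<And>i. i < Suc n \<Longrightarrow> (-1) ^ (n - i) * meixner n (ys ! i) a c > 0"
proof -
  have "\<And>k. pochhammer a k \<noteq> 0"
    using pochhammer_pos[OF assms(1)] by (metis less_irrefl)
  note meixner_a = meixner_eq_poly_orth_poly[OF this, of c]
  have "\<And>j. 0 < meixner_B a c (Suc j)"
    using assms by (rule meixner_B_pos)
  then obtain ts ys where P: "orth_poly (meixner_A a c) (meixner_B a c) n = root_poly ts"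
    "orth_poly (meixner_A a c) (meixner_B a c) (Suc n) = root_poly ys"
    "sorted_wrt (<) ts" "sorted_wrt (<) ys" "length ts = n" "length ys = Suc n" "interleaved ys ts"
    by (rule orth_poly_roots_interleave)
  show ?thesis
  proof (rule that)
    show "{x. meixner (Suc n) x a c = 0} = set ys"
      using P(2) assms by (simp add: meixner_a poly_root_poly_eq_0_iff)
    show "(-1) ^ (n - i) * meixner n (ys ! i) a c > 0" if "i < Suc n" for i
      using sign_root_poly_interleaved[OF P(3,7)] P(1,5,6) that assms by (simp add: meixner_a)
  qed (use P in auto)
qed

lemma linear_times_meixner_monic:
  assumes "\<And>k. pochhammer b k \<noteq> 0" and "c \<noteq> 0" "c \<noteq> 1"
  obtains f where "degree f = Suc n" "lead_coeff f = 1" "\<And>x. poly f x = (x - C) * meixner n x b c"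
proof
  define p where "p = orth_poly (meixner_A b c) (meixner_B b c) n"
  have "p \<noteq> 0"
    using lead_coeff_orth_poly unfolding p_def by (metis leading_coeff_0_iff one_neq_zero)
  then show "degree ([:- C, 1:] * p) = Suc n"
    by (subst degree_mult_eq) (simp_all add: p_def degree_orth_poly)
  show "lead_coeff ([:- C, 1:] * p) = 1"
    unfolding lead_coeff_mult by (simp add: p_def lead_coeff_orth_poly)
  show "poly ([:- C, 1:] * p) x = (x - C) * meixner n x b c" for x
    by (simp add: p_def meixner_eq_poly_orth_poly[OF assms] left_diff_distrib)
qed

lemma shifted_meixner_zeros_interleave:
  assumes "-1 < b" "b \<noteq> 0" and "0 < c" "c < 1" and "1 \<le> n"
    and "meixner n (- b + real (n + 1) * c / (1 - c)) b c \<noteq> 0"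
  obtains zs ys
  where "{x. (x - (- b + real (n + 1) * c / (1 - c))) * meixner n x b c = 0} = set zs"
    and "{x. meixner (n + 1) x (b + 1) c = 0} = set ys"
    and "sorted_wrt (<) zs" "sorted_wrt (<) ys" "length zs = Suc n" "length ys = Suc n"
    and "interleaved zs ys"
proof -
  define C where "C = - b + real (n + 1) * c / (1 - c)"
  have "0 < b + 1"
    using assms(1) by simp
  then obtain ys where Y: "{x. meixner (Suc n) x (b + 1) c = 0} = set ys" "sorted_wrt (<) ys"
    "length ys = Suc n" "\<And>i. i < Suc n \<Longrightarrow> (-1) ^ (n - i) * meixner n (ys ! i) (b + 1) c > 0"
    using meixner_zeros_alternate[where n = n, OF _ assms(3,4)] by blast
  have "\<And>k. pochhammer b k \<noteq> 0" "c \<noteq> 0" "c \<noteq> 1"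
    using assms(1-4) by (simp_all add: pochhammer_neq_0_of_gt_minus_one)
  then obtain f where f: "degree f = Suc n" "lead_coeff f = 1" "\<And>x. poly f x = (x - C) * meixner n x b c"
    using linear_times_meixner_monic[where n = n and C = C] by blast
  have sign: "(-1) ^ (length ys - 1 - i) * poly f (ys ! i) > 0" if i: "i < length ys" for i
  proof -
    have pos: "(-1) ^ (n - i) * meixner n (ys ! i) (b + 1) c > 0"
      using Y(3,4) i by simp
    have zero: "meixner (n + 1) (ys ! i) (b + 1) c = 0"
      using Y(1) i nth_mem by fastforce
    have "0 < (ys ! i - C) * meixner n (ys ! i) b c * meixner n (ys ! i) (b + 1) c"
      unfolding C_def using pos by (intro meixner_sign_at_zero_of_successor[OF assms zero]) auto
    then have "0 < (-1) ^ (n - i) * ((ys ! i - C) * meixner n (ys ! i) b c)"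
      by (rule same_sign_mult_pos[OF pos])
    then show ?thesis
      using Y(3) by (simp add: f(3))
  qed
  have "degree f = length ys"
    using f(1) Y(3) by simp
  then obtain zs where zs: "f = root_poly zs" "sorted_wrt (<) zs" "length zs = length ys"
    "interleaved zs ys"
    by (rule roots_interleave_of_sign_changes[OF _ f(2) Y(2) sign])
  show ?thesis
  proof (rule that[folded C_def])
    show "{x. (x - C) * meixner n x b c = 0} = set zs"
      using zs(1) by (auto simp flip: f(3) simp: poly_root_poly_eq_0_iff)
  qed (use Y zs in auto)
qed

theorem theorem3p6:
  fixes b c :: real and n :: nat
  assumes "0 < - b" "- b < 1" and "0 < c" "c < 1" and "n \<ge> 2"
    and "meixner n (- b + real (n + 1) * c / (1 - c)) b c \<noteq> 0"
  shows "let C = - b + real (n + 1) * c / (1 - c);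
             Z1 = {x. (x - C) * meixner n x b c = 0};
             Z2 = {x. meixner (n + 1) x (b + 1) c = 0}
         in card Z1 = n + 1 \<and> card Z2 = n + 1 \<and> interlace Z1 Z2"
proof -
  have hyps: "-1 < b" "b \<noteq> 0" "1 \<le> n"
    using assms(1,2,5) by auto
  obtain zs ys
    where Z1: "{x. (x - (- b + real (n + 1) * c / (1 - c))) * meixner n x b c = 0} = set zs"
      and Z2: "{x. meixner (n + 1) x (b + 1) c = 0} = set ys"
      and zs_ys: "sorted_wrt (<) zs" "sorted_wrt (<) ys" "length zs = Suc n" "length ys = Suc n"
        "interleaved zs ys"
    by (rule shifted_meixner_zeros_interleave[OF hyps(1,2) assms(3,4) hyps(3) assms(6)])
  then show ?thesis
    unfolding Let_def Z1 Z2 using interlace_set_interleaved[OF zs_ys(1,2)]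
    by (simp add: distinct_card strict_sorted_iff)
qed

end
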